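(* $(\mathbb{S},\tau)$ is a corecursive algebra for $M\otimes-\colon\mathsf{SquaMS}\to\mathsf{SquaMS}$; that is, for every coalgebra $\beta\colon B\to M\otimes B$ in $\mathsf{SquaMS}$ there is a unique morphism $\beta^*\colon B\to\mathbb{S}$ with $\beta^*=\tau\circ(M\otimes\beta^* )\circ\beta$.
   Context: Let $M_0=\{(r,s)\in[0,1]^2: r\in\{0,1\}\text{ or } s\in\{0,1\}\}$. A square metric space is a pair $(X,S_X)$ with $X$ a metric space with all distances at most $2$ and $S_X\colon M_0\to X$ injective such that (sq1) for $i\in\{0,1\}$, $r,s\in[0,1]$: $d_X(S_X(i,r),S_X(i,s))=|s-r|$ and $d_X(S_X(r,i),S_X(s,i))=|s-r|$; (sq2) $d_X(S_X(r,s),S_X(t,u))\ge|r-t|+|s-u|$. $\mathsf{SquaMS}$: these objects, with short maps $f$ satisfying $f\circ S_X=S_Y$ as morphisms. Let $N=\{0,1,2\}^2$, $M=N\setminus\{(1,1)\}$, also viewed as points of $\mathbb{R}^2$. For $X$ in $\mathsf{SquaMS}$, $M\otimes X=(M\times X)/\!\sim$, where $\sim$ is generated by $(m,S_X(p))\sim(n,S_X(q))$ whenever $m,n\in M$ differ by exactly $1$ in exactly one coordinate and $(m+p)/3=(n+q)/3$; $m\otimes x$ is the class of $(m,x)$. With $d((a,u),(b,v))=\frac13 d_X(u,v)$ if $a=b$ and $2$ otherwise, $M\otimes X$ gets the quotient metric (infimum over finite chains of sums of consecutive distances, $\sim$-related consecutive pairs counting $0$). $S_{M\otimes X}(p)=m\otimes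 S_X(3p-m)$ for any $m\in M$ with $p\in(m+[0,1]^2)/3$; $(M\otimes f)(m\otimes x)=m\otimes f(x)$. The Sierpinski carpet $\mathbb{S}$ is the unique nonempty compact $K\subseteq[0,1]^2$ with $K=\bigcup_{m\in M}\frac13(m+K)$; it carries the taxicab metric $d((x,y),(x',y'))=|x-x'|+|y-y'|$ and $S_{\mathbb{S}}$ is the inclusion of $M_0\subseteq\mathbb{S}$, making it a square metric space. $\tau\colon M\otimes\mathbb{S}\to\mathbb{S}$ is $\tau(m\otimes s)=\frac13(m+s)$. *)

theory Defs
  imports "HOL-Analysis.Analysis"
begin

definition M0 :: "(real \<times> real) set" where
  "M0 = {(r, s). r \<in> {0..1} \<and> s \<in> {0..1} \<and> (r \<in> {0, 1} \<or> s \<in> {0, 1})}"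

text \<open>A square metric space is given by a carrier X, a metric d and the map S (only its
  values on M0 matter).\<close>
definition square_ms :: "'a set \<Rightarrow> ('a \<Rightarrow> 'a \<Rightarrow> real) \<Rightarrow> (real \<times> real \<Rightarrow> 'a) \<Rightarrow> bool" where
  "square_ms X d S \<longleftrightarrow>
     Metric_space X d \<and>
     (\<forall>x\<in>X. \<forall>y\<in>X. d x y \<le> 2) \<and>
     S ` M0 \<subseteq> X \<and> inj_on S M0 \<and>
     (\<forall>i\<in>{0, 1}. \<forall>r\<in>{0..1}. \<forall>s\<in>{0..1}.
        d (S (i, r)) (S (i, s)) = \<bar>s - r\<bar> \<and> d (S (r, i)) (S (s, i)) = \<bar>s - r\<bar>) \<and>
     (\<forall>p\<in>M0. \<forall>q\<in>M0. d (S p) (S q) \<ge> \<bar>fst p - fst q\<bar> + \<bar>snd p - snd q\<bar>)"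

definition squams_morphism ::
  "'a set \<Rightarrow> ('a \<Rightarrow> 'a \<Rightarrow> real) \<Rightarrow> (real \<times> real \<Rightarrow> 'a) \<Rightarrow>
   'b set \<Rightarrow> ('b \<Rightarrow> 'b \<Rightarrow> real) \<Rightarrow> (real \<times> real \<Rightarrow> 'b) \<Rightarrow> ('a \<Rightarrow> 'b) \<Rightarrow> bool" where
  "squams_morphism X dX SX Y dY SY f \<longleftrightarrow>
     f \<in> X \<rightarrow> Y \<and>
     (\<forall>x\<in>X. \<forall>y\<in>X. dY (f x) (f y) \<le> dX x y) \<and>
     (\<forall>p\<in>M0. f (SX p) = SY p)"

definition Nset :: "(nat \<times> nat) set" where
  "Nset = {0, 1, 2} \<times> {0, 1, 2}"

definition Mset :: "(nat \<times> nat) set" where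
  "Mset = Nset - {(1, 1)}"

definition adjacent :: "nat \<times> nat \<Rightarrow> nat \<times> nat \<Rightarrow> bool" where
  "adjacent m n \<longleftrightarrow>
     (\<bar>int (fst m) - int (fst n)\<bar> = 1 \<and> snd m = snd n) \<or>
     (fst m = fst n \<and> \<bar>int (snd m) - int (snd n)\<bar> = 1)"

definition tensor_gen :: "(real \<times> real \<Rightarrow> 'a) \<Rightarrow> (((nat \<times> nat) \<times> 'a) \<times> ((nat \<times> nat) \<times> 'a)) set" where
  "tensor_gen S = {((m, S p), (n, S q)) | m n p q.
     m \<in> Mset \<and> n \<in> Mset \<and> adjacent m n \<and> p \<in> M0 \<and> q \<in> M0 \<and>
     (real (fst m) + fst p) / 3 = (real (fst n) + fst q) / 3 \<and>
     (real (snd m) + snd p) / 3 = (real (snd n) + snd q) / 3}"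

definition tensor_rel :: "'a set \<Rightarrow> (real \<times> real \<Rightarrow> 'a) \<Rightarrow> (((nat \<times> nat) \<times> 'a) \<times> ((nat \<times> nat) \<times> 'a)) set" where
  "tensor_rel X S = {(a, b). a \<in> Mset \<times> X \<and> b \<in> Mset \<times> X \<and>
     (a, b) \<in> (tensor_gen S \<union> (tensor_gen S)\<inverse>)\<^sup>*}"

definition tensor_carrier :: "'a set \<Rightarrow> (real \<times> real \<Rightarrow> 'a) \<Rightarrow> ((nat \<times> nat) \<times> 'a) set set" where
  "tensor_carrier X S = (Mset \<times> X) // tensor_rel X S"

definition tensor_elem :: "'a set \<Rightarrow> (real \<times> real \<Rightarrow> 'a) \<Rightarrow> nat \<times> nat \<Rightarrow> 'a \<Rightarrow> ((nat \<times> nat) \<times> 'a) set" where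
  "tensor_elem X S m x = tensor_rel X S `` {(m, x)}"

definition base_dist :: "('a \<Rightarrow> 'a \<Rightarrow> real) \<Rightarrow> (nat \<times> nat) \<times> 'a \<Rightarrow> (nat \<times> nat) \<times> 'a \<Rightarrow> real" where
  "base_dist d a b = (if fst a = fst b then d (snd a) (snd b) / 3 else 2)"

definition step_cost :: "'a set \<Rightarrow> ('a \<Rightarrow> 'a \<Rightarrow> real) \<Rightarrow> (real \<times> real \<Rightarrow> 'a) \<Rightarrow>
    (nat \<times> nat) \<times> 'a \<Rightarrow> (nat \<times> nat) \<times> 'a \<Rightarrow> real" where
  "step_cost X d S a b = (if (a, b) \<in> tensor_rel X S then 0 else base_dist d a b)"

definition chain_cost :: "'a set \<Rightarrow> ('a \<Rightarrow> 'a \<Rightarrow> real) \<Rightarrow> (real \<times> real \<Rightarrow> 'a) \<Rightarrow>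
    ((nat \<times> nat) \<times> 'a) list \<Rightarrow> real" where
  "chain_cost X d S xs = sum_list (map2 (step_cost X d S) xs (tl xs))"

definition tensor_dist :: "'a set \<Rightarrow> ('a \<Rightarrow> 'a \<Rightarrow> real) \<Rightarrow> (real \<times> real \<Rightarrow> 'a) \<Rightarrow>
    ((nat \<times> nat) \<times> 'a) set \<Rightarrow> ((nat \<times> nat) \<times> 'a) set \<Rightarrow> real" where
  "tensor_dist X d S A B = Inf {chain_cost X d S xs | xs.
      xs \<noteq> [] \<and> set xs \<subseteq> Mset \<times> X \<and> hd xs \<in> A \<and> last xs \<in> B}"

definition cell :: "nat \<times> nat \<Rightarrow> (real \<times> real) set" where
  "cell m = {(x, y). real (fst m) \<le> 3 * x \<and> 3 * x \<le> real (fst m) + 1 \<and>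
                      real (snd m) \<le> 3 * y \<and> 3 * y \<le> real (snd m) + 1}"

definition tensor_S :: "'a set \<Rightarrow> (real \<times> real \<Rightarrow> 'a) \<Rightarrow> real \<times> real \<Rightarrow> ((nat \<times> nat) \<times> 'a) set" where
  "tensor_S X S p = (let m = (SOME m. m \<in> Mset \<and> p \<in> cell m) in
     tensor_elem X S m (S (3 * fst p - real (fst m), 3 * snd p - real (snd m))))"

definition tensor_map :: "'b set \<Rightarrow> (real \<times> real \<Rightarrow> 'b) \<Rightarrow> ('a \<Rightarrow> 'b) \<Rightarrow>
    ((nat \<times> nat) \<times> 'a) set \<Rightarrow> ((nat \<times> nat) \<times> 'b) set" where
  "tensor_map Y SY f A = (let a = (SOME a. a \<in> A) in tensor_elem Y SY (fst a) (f (snd a)))"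

definition carpet_maps :: "(real \<times> real) set \<Rightarrow> (real \<times> real) set" where
  "carpet_maps K = (\<Union>m\<in>Mset. (\<lambda>k. ((real (fst m) + fst k) / 3, (real (snd m) + snd k) / 3)) ` K)"

definition carpet :: "(real \<times> real) set" where
  "carpet = (THE K. K \<noteq> {} \<and> compact K \<and> K \<subseteq> {0..1} \<times> {0..1} \<and> K = carpet_maps K)"

definition taxicab :: "real \<times> real \<Rightarrow> real \<times> real \<Rightarrow> real" where
  "taxicab p q = \<bar>fst p - fst q\<bar> + \<bar>snd p - snd q\<bar>"

definition carpet_S :: "real \<times> real \<Rightarrow> real \<times> real" where
  "carpet_S p = p"

definition tau :: "((nat \<times> nat) \<times> (real \<times> real)) set \<Rightarrow> real \<times> real" where
  "tau A = (let a = (SOME a. a \<in> A) in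
     ((real (fst (fst a)) + fst (snd a)) / 3, (real (snd (fst a)) + snd (snd a)) / 3))"

end

theory Submission
  imports Defs
begin

(* Write Phi h = tau o (M \<otimes> h) o \<beta> for maps h from B to the unit square. Each cell of
   M \<otimes> - is a copy of the square scaled by 1/3, so Phi is a 1/3-contraction for the supremum
   of the taxicab distance, and it maps morphisms B \<rightarrow> [0,1]^2 of square metric spaces to such
   morphisms. One such morphism is obtained by extending the coordinates x + y and x - y from
   M0 with McShane's formula. Its Phi-iterates converge pointwise to a short map fixing M0 that
   is a fixed point of Phi; the limit lies in the carpet, because the iterates of a constant
   carpet-valued map stay in the carpet and all iterates approach each other. Uniqueness is
   the contraction property. *)

section \<open>The carpet\<close>

abbreviation unit_square :: "(real \<times> real) set" where
  "unit_square \<equiv> {0..1} \<times> {0..1}"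

definition carpet_map :: "nat \<times> nat \<Rightarrow> real \<times> real \<Rightarrow> real \<times> real" where
  "carpet_map m z = ((real (fst m) + fst z) / 3, (real (snd m) + snd z) / 3)"

lemma carpet_maps_eq: "carpet_maps K = (\<Union>m\<in>Mset. carpet_map m ` K)"
  unfolding carpet_maps_def carpet_map_def by simp

lemma finite_Mset: "finite Mset"
  unfolding Mset_def Nset_def by simp

lemma Mset_le_2: "m \<in> Mset \<Longrightarrow> fst m \<le> 2 \<and> snd m \<le> 2"
  unfolding Mset_def Nset_def by auto

lemma carpet_map_unit_square: "m \<in> Mset \<Longrightarrow> z \<in> unit_square \<Longrightarrow> carpet_map m z \<in> unit_square"
  using Mset_le_2[of m] unfolding carpet_map_def by (auto simp: mem_Times_iff)

lemma continuous_on_carpet_map: "continuous_on A (carpet_map m)"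
  unfolding carpet_map_def by (intro continuous_intros) auto

lemma taxicab_carpet_map: "taxicab (carpet_map m u) (carpet_map m v) = taxicab u v / 3"
  unfolding taxicab_def carpet_map_def
  by (simp add: abs_div_pos[symmetric] diff_divide_distrib[symmetric])

lemma taxicab_triangle: "taxicab u w \<le> taxicab u v + taxicab v w"
  unfolding taxicab_def by linarith

lemma taxicab_unit_square_le_2: "u \<in> unit_square \<Longrightarrow> v \<in> unit_square \<Longrightarrow> taxicab u v \<le> 2"
  unfolding taxicab_def by (auto simp: mem_Times_iff abs_if)

lemma dist_le_taxicab: "dist u v \<le> taxicab u v"
proof -
  have "dist u v = sqrt ((fst u - fst v)\<^sup>2 + (snd u - snd v)\<^sup>2)"
    by (cases u; cases v) (simp add: dist_Pair_Pair dist_real_def)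
  also have "\<dots> \<le> taxicab u v"
    unfolding taxicab_def by (rule sqrt_sum_squares_le_sum_abs)
  finally show ?thesis .
qed

lemma ex_div_pow3_less: "0 < e \<Longrightarrow> \<exists>n. c / 3 ^ n < (e::real)"
  using order_tendstoD(2)[OF LIMSEQ_divide_realpow_zero[of 3 c]]
  by (simp add: eventually_sequentially) (meson order_refl)

lemma taxicab_le_div_pow3_imp_eq:
  assumes "\<And>n. taxicab u v \<le> c / 3 ^ n"
  shows "u = v"
proof -
  have "taxicab u v \<le> 0"
    using LIMSEQ_le[OF tendsto_const LIMSEQ_divide_realpow_zero[of 3 c]] assms by simp
  then show ?thesis
    unfolding taxicab_def by (auto simp: prod_eq_iff)
qed

lemma mem_closure_if_taxicab_approx:
  assumes "\<And>n. \<exists>k\<in>K. taxicab a k \<le> c / 3 ^ n"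
  shows "a \<in> closure K"
  unfolding closure_approachable
proof (intro allI impI)
  fix e :: real
  assume "e > 0"
  then obtain n where n: "c / 3 ^ n < e"
    using ex_div_pow3_less by blast
  obtain k where "k \<in> K" "taxicab a k \<le> c / 3 ^ n"
    using assms by blast
  then show "\<exists>k\<in>K. dist k a < e"
    using n dist_le_taxicab[of a k] by (metis dist_commute le_less_trans order_trans)
qed

inductive_set carpet_orbit :: "(real \<times> real) set" where
  origin: "(0, 0) \<in> carpet_orbit"
| step: "p \<in> carpet_orbit \<Longrightarrow> m \<in> Mset \<Longrightarrow> carpet_map m p \<in> carpet_orbit"

definition is_carpet :: "(real \<times> real) set \<Rightarrow> bool" where
  "is_carpet K \<longleftrightarrow> K \<noteq> {} \<and> compact K \<and> K \<subseteq> unit_square \<and> K = carpet_maps K"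

lemma subset_closure_if_carpet_maps_covers:
  assumes A: "A \<subseteq> unit_square" "A \<subseteq> carpet_maps A"
    and K: "K \<subseteq> unit_square" "K \<noteq> {}" "carpet_maps K \<subseteq> K"
  shows "A \<subseteq> closure K"
proof
  have approx: "\<exists>k\<in>K. taxicab a k \<le> 2 / 3 ^ n" if "a \<in> A" for n a
    using that
  proof (induction n arbitrary: a)
    case 0
    obtain k where "k \<in> K"
      using K(2) by blast
    then have "taxicab a k \<le> 2"
      using 0 A(1) K(1) by (intro taxicab_unit_square_le_2) auto
    then show ?case
      using \<open>k \<in> K\<close> by auto
  next
    case (Suc n)
    then obtain m a' where m: "m \<in> Mset" "a' \<in> A" "a = carpet_map m a'"
      using A(2) unfolding carpet_maps_eq by blast
    then obtain k where k: "k \<in> K" "taxicab a' k \<le> 2 / 3 ^ n"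
      using Suc.IH by blast
    have "carpet_map m k \<in> K"
      using K(3) m(1) k(1) unfolding carpet_maps_eq by blast
    moreover have "taxicab a (carpet_map m k) \<le> 2 / 3 ^ Suc n"
      using k(2) m(3) by (simp add: taxicab_carpet_map)
    ultimately show ?case
      by blast
  qed
  fix a
  assume "a \<in> A"
  then show "a \<in> closure K"
    using approx by (intro mem_closure_if_taxicab_approx) blast
qed

lemma is_carpet_subset:
  assumes "is_carpet K" "is_carpet K'"
  shows "K \<subseteq> K'"
  using assms subset_closure_if_carpet_maps_covers[of K K'] closure_closed[of K']
  unfolding is_carpet_def by (simp add: compact_imp_closed)

lemma carpet_orbit_subset_unit_square: "carpet_orbit \<subseteq> unit_square"
proof
  fix p
  assume "p \<in> carpet_orbit"
  then show "p \<in> unit_square"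
    by induction (auto intro: carpet_map_unit_square)
qed

lemma carpet_maps_carpet_orbit: "carpet_maps carpet_orbit = carpet_orbit"
proof
  show "carpet_maps carpet_orbit \<subseteq> carpet_orbit"
    unfolding carpet_maps_eq by (auto intro: carpet_orbit.step)
  have "(0, 0) = carpet_map (0, 0) (0, 0)" and "(0, 0) \<in> Mset"
    by (simp_all add: carpet_map_def Mset_def Nset_def)
  then show "carpet_orbit \<subseteq> carpet_maps carpet_orbit"
    unfolding carpet_maps_eq by (blast elim: carpet_orbit.cases intro: carpet_orbit.origin)
qed

lemma is_carpet_closure_carpet_orbit: "is_carpet (closure carpet_orbit)"
proof -
  let ?K = "closure carpet_orbit"
  have unit: "?K \<subseteq> unit_square"
    using carpet_orbit_subset_unit_square by (intro closure_minimal closed_Times) auto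
  then have compact: "compact ?K"
    using compact_Int_closed[OF compact_Times[OF compact_Icc compact_Icc] closed_closure,
        of 0 1 0 1 carpet_orbit]
    by (metis Int_absorb1)
  have "carpet_maps ?K \<subseteq> ?K"
  proof -
    have "carpet_map m ` ?K \<subseteq> ?K" if "m \<in> Mset" for m
    proof (rule image_closure_subset[OF continuous_on_carpet_map closed_closure])
      show "carpet_map m ` carpet_orbit \<subseteq> ?K"
        using that closure_subset carpet_orbit.step by blast
    qed
    then show ?thesis
      unfolding carpet_maps_eq by blast
  qed
  moreover have "?K \<subseteq> carpet_maps ?K"
  proof (rule closure_minimal)
    have "carpet_maps carpet_orbit \<subseteq> carpet_maps ?K"
      unfolding carpet_maps_eq using closure_subset by blast
    then show "carpet_orbit \<subseteq> carpet_maps ?K"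
      using carpet_maps_carpet_orbit by simp
    show "closed (carpet_maps ?K)"
      unfolding carpet_maps_eq using compact finite_Mset
      by (intro closed_UN ballI compact_imp_closed compact_continuous_image
          continuous_on_carpet_map) auto
  qed
  moreover have "?K \<noteq> {}"
    using carpet_orbit.origin closure_subset by blast
  ultimately show ?thesis
    unfolding is_carpet_def using unit compact by blast
qed

lemma is_carpet_carpet: "is_carpet carpet"
proof -
  have "\<exists>!K. is_carpet K"
    using is_carpet_closure_carpet_orbit is_carpet_subset by (blast intro: subset_antisym)
  then show ?thesis
    unfolding carpet_def is_carpet_def[symmetric] by (rule theI')
qed

lemma carpet_subset_unit_square: "carpet \<subseteq> unit_square"
  and closed_carpet: "closed carpet"
  and carpet_nonempty: "carpet \<noteq> {}"
  and carpet_maps_carpet: "carpet_maps carpet = carpet"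
  using is_carpet_carpet compact_imp_closed unfolding is_carpet_def by auto

lemma carpet_map_carpet: "m \<in> Mset \<Longrightarrow> z \<in> carpet \<Longrightarrow> carpet_map m z \<in> carpet"
  using carpet_maps_carpet unfolding carpet_maps_eq by blast

definition digit :: "real \<Rightarrow> nat" where
  "digit t = min 2 (nat \<lfloor>3 * t\<rfloor>)"

lemma digit_bounds:
  assumes "t \<in> {0..1}"
  shows "digit t \<le> 2" "real (digit t) \<le> 3 * t" "3 * t \<le> real (digit t) + 1"
proof -
  have floor: "0 \<le> \<lfloor>3 * t\<rfloor>" "of_int \<lfloor>3 * t\<rfloor> \<le> 3 * t" "3 * t < of_int \<lfloor>3 * t\<rfloor> + 1"
    using assms by auto
  show "digit t \<le> 2"
    unfolding digit_def by simp
  have "real (digit t) \<le> 3 * t \<and> 3 * t \<le> real (digit t) + 1"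
  proof (cases "2 \<le> 3 * t")
    case True
    then have "digit t = 2"
      unfolding digit_def by (simp add: le_floor_iff le_nat_iff)
    then show ?thesis
      using True assms by auto
  next
    case False
    then have "\<lfloor>3 * t\<rfloor> \<le> 1"
      by (simp add: floor_le_iff)
    then have "digit t = nat \<lfloor>3 * t\<rfloor>"
      unfolding digit_def by (intro min_absorb2) arith
    then have "real (digit t) = of_int \<lfloor>3 * t\<rfloor>"
      using floor(1) by simp
    then show ?thesis
      using floor by auto
  qed
  then show "real (digit t) \<le> 3 * t" "3 * t \<le> real (digit t) + 1"
    by auto
qed

lemma M0_subset_unit_square: "M0 \<subseteq> unit_square"
  unfolding M0_def by auto

lemma M0_in_digit_cell:
  assumes "p \<in> M0"
  shows "(digit (fst p), digit (snd p)) \<in> Mset" "p \<in> cell (digit (fst p), digit (snd p))"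
proof -
  have unit: "fst p \<in> {0..1}" "snd p \<in> {0..1}"
    using assms M0_subset_unit_square by (auto simp: mem_Times_iff)
  have "digit 0 = 0" "digit 1 = 2"
    unfolding digit_def by simp_all
  moreover have "fst p \<in> {0, 1} \<or> snd p \<in> {0, 1}"
    using assms unfolding M0_def by auto
  ultimately have "(digit (fst p), digit (snd p)) \<noteq> (1, 1)"
    by auto
  moreover have "digit t \<in> {0, 1, 2}" if "t \<in> {0..1}" for t
    using digit_bounds(1)[OF that] by (auto simp: le_Suc_eq numeral_2_eq_2)
  then have "(digit (fst p), digit (snd p)) \<in> Nset"
    using unit unfolding Nset_def by blast
  ultimately show "(digit (fst p), digit (snd p)) \<in> Mset"
    unfolding Mset_def by blast
  show "p \<in> cell (digit (fst p), digit (snd p))"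
    using digit_bounds[OF unit(1)] digit_bounds[OF unit(2)] unfolding cell_def
    by (simp add: case_prod_beta)
qed

lemma M0_rescale:
  assumes p: "p \<in> M0" and m: "m \<in> Mset" "p \<in> cell m"
  defines "q \<equiv> (3 * fst p - real (fst m), 3 * snd p - real (snd m))"
  shows "q \<in> M0" "carpet_map m q = p"
proof -
  have x: "real (fst m) \<le> 3 * fst p" "3 * fst p \<le> real (fst m) + 1" "real (fst m) \<le> 2"
    and y: "real (snd m) \<le> 3 * snd p" "3 * snd p \<le> real (snd m) + 1" "real (snd m) \<le> 2"
    using m Mset_le_2[OF m(1)] unfolding cell_def by (auto simp: case_prod_beta)
  have "fst p \<in> {0, 1} \<Longrightarrow> fst q \<in> {0, 1}" "snd p \<in> {0, 1} \<Longrightarrow> snd q \<in> {0, 1}"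
    using x y unfolding q_def by auto
  moreover have "fst p \<in> {0, 1} \<or> snd p \<in> {0, 1}"
    using p unfolding M0_def by auto
  moreover have "fst q \<in> {0..1}" "snd q \<in> {0..1}"
    using x y unfolding q_def by auto
  ultimately show "q \<in> M0"
    unfolding M0_def by (auto simp: case_prod_beta)
  show "carpet_map m q = p"
    unfolding q_def carpet_map_def by simp
qed

section \<open>Square metric spaces and M \<otimes> -\<close>

lemma square_msD:
  assumes "square_ms X d S"
  shows "Metric_space X d" "p \<in> M0 \<Longrightarrow> S p \<in> X"
    "p \<in> M0 \<Longrightarrow> q \<in> M0 \<Longrightarrow> taxicab p q \<le> d (S p) (S q)"
  using assms unfolding square_ms_def taxicab_def by blast+

lemma squams_morphismD:
  assumes "squams_morphism X dX SX Y dY SY f"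
  shows "x \<in> X \<Longrightarrow> f x \<in> Y" "x \<in> X \<Longrightarrow> y \<in> X \<Longrightarrow> dY (f x) (f y) \<le> dX x y"
    "p \<in> M0 \<Longrightarrow> f (SX p) = SY p"
  using assms unfolding squams_morphism_def by blast+

lemma squams_morphism_funcset: "squams_morphism X dX SX Y dY SY f \<Longrightarrow> f \<in> X \<rightarrow> Y"
  unfolding squams_morphism_def by blast

lemma squams_morphism_comp:
  assumes "squams_morphism X dX SX Y dY SY f" "squams_morphism Y dY SY Z dZ SZ g"
  shows "squams_morphism X dX SX Z dZ SZ (g \<circ> f)"
  using assms unfolding squams_morphism_def by (auto simp: Pi_iff) (meson order_trans)

lemma tensor_gen_E:
  assumes "(a, b) \<in> tensor_gen S"
  obtains m n p q where "a = (m, S p)" "b = (n, S q)" "m \<in> Mset" "n \<in> Mset" "p \<in> M0" "q \<in> M0"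
    "carpet_map m p = carpet_map n q"
  using assms unfolding tensor_gen_def carpet_map_def by (auto simp: prod_eq_iff)

lemma tensor_rel_invariant:
  assumes F: "\<And>m n p q. m \<in> Mset \<Longrightarrow> n \<in> Mset \<Longrightarrow> p \<in> M0 \<Longrightarrow> q \<in> M0 \<Longrightarrow>
      carpet_map m p = carpet_map n q \<Longrightarrow> F (m, S p) = F (n, S q)"
    and "(a, b) \<in> tensor_rel X S"
  shows "F a = F b"
proof -
  have "(a, b) \<in> (tensor_gen S \<union> (tensor_gen S)\<inverse>)\<^sup>*"
    using assms(2) unfolding tensor_rel_def by simp
  then show ?thesis
  proof (induction rule: rtrancl_induct)
    case (step b c)
    then have "F b = F c"
      by (auto elim!: tensor_gen_E intro: F F[symmetric])
    then show ?case
      using step.IH by simp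
  qed simp
qed

lemma tensor_rel_refl: "a \<in> Mset \<times> X \<Longrightarrow> (a, a) \<in> tensor_rel X S"
  unfolding tensor_rel_def by simp

lemma tensor_elem_in_carrier: "(m, x) \<in> Mset \<times> X \<Longrightarrow> tensor_elem X S m x \<in> tensor_carrier X S"
  unfolding tensor_elem_def tensor_carrier_def by (rule quotientI)

lemma mem_tensor_elem: "(m, x) \<in> Mset \<times> X \<Longrightarrow> (m, x) \<in> tensor_elem X S m x"
  unfolding tensor_elem_def using tensor_rel_refl by blast

lemma tensor_carrierE:
  assumes "A \<in> tensor_carrier X S"
  obtains c where "c \<in> Mset \<times> X" "A = tensor_rel X S `` {c}"
  using assms unfolding tensor_carrier_def by (auto elim: quotientE)

lemma tensor_carrier_subset: "A \<in> tensor_carrier X S \<Longrightarrow> A \<subseteq> Mset \<times> X"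
  by (auto elim!: tensor_carrierE simp: tensor_rel_def)

lemma some_in_tensor_carrier:
  assumes "A \<in> tensor_carrier X S"
  shows "(SOME a. a \<in> A) \<in> A"
proof -
  obtain c where "c \<in> Mset \<times> X" "A = tensor_rel X S `` {c}"
    using assms by (rule tensor_carrierE)
  then have "c \<in> A"
    using tensor_rel_refl by blast
  then show ?thesis
    by (rule someI)
qed

lemma tensor_S_eq:
  assumes "p \<in> M0"
  obtains m q where "m \<in> Mset" "q \<in> M0" "carpet_map m q = p" "tensor_S X S p = tensor_elem X S m (S q)"
proof -
  define m where "m = (SOME m. m \<in> Mset \<and> p \<in> cell m)"
  have "\<exists>m. m \<in> Mset \<and> p \<in> cell m"
    using M0_in_digit_cell[OF assms] by blast
  then have m: "m \<in> Mset" "p \<in> cell m"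
    unfolding m_def by (metis (mono_tags, lifting) someI_ex)+
  show ?thesis
    using that[OF m(1) M0_rescale[OF assms m]]
    unfolding tensor_S_def m_def[symmetric] Let_def by blast
qed

definition tau_pair :: "('a \<Rightarrow> real \<times> real) \<Rightarrow> (nat \<times> nat) \<times> 'a \<Rightarrow> real \<times> real" where
  "tau_pair h a = carpet_map (fst a) (h (snd a))"

(* tau_tensor h is tau o (M \<otimes> h) with the unit square in place of the carpet, read off a
   chosen representative; by tau_tensor_eq the choice does not matter when h fixes M0. *)
definition tau_tensor :: "('a \<Rightarrow> real \<times> real) \<Rightarrow> ((nat \<times> nat) \<times> 'a) set \<Rightarrow> real \<times> real" where
  "tau_tensor h A = tau_pair h (SOME a. a \<in> A)"

lemma tau_eq_tau_tensor_id: "tau = tau_tensor id"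
  unfolding tau_def tau_tensor_def tau_pair_def carpet_map_def by (simp add: fun_eq_iff Let_def)

lemma tau_pair_tensor_rel:
  assumes "\<forall>p\<in>M0. h (S p) = p" "(a, b) \<in> tensor_rel X S"
  shows "tau_pair h a = tau_pair h b"
  by (rule tensor_rel_invariant[OF _ assms(2)]) (simp add: tau_pair_def assms(1))

lemma tau_tensor_eq:
  assumes "\<forall>p\<in>M0. h (S p) = p" "A \<in> tensor_carrier X S" "a \<in> A"
  shows "tau_tensor h A = tau_pair h a"
proof -
  obtain c where c: "A = tensor_rel X S `` {c}"
    using assms(2) by (rule tensor_carrierE)
  have "(c, SOME a. a \<in> A) \<in> tensor_rel X S" "(c, a) \<in> tensor_rel X S"
    using c some_in_tensor_carrier[OF assms(2)] assms(3) by auto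
  then show ?thesis
    unfolding tau_tensor_def using tau_pair_tensor_rel[where h = h and S = S, OF assms(1)] by metis
qed

lemma tau_tensor_map:
  assumes "h \<in> X \<rightarrow> carpet" "A \<in> tensor_carrier X S"
  shows "tau (tensor_map carpet carpet_S h A) = tau_tensor h A"
proof -
  define a where "a = (SOME a. a \<in> A)"
  have "a \<in> Mset \<times> X"
    unfolding a_def using some_in_tensor_carrier tensor_carrier_subset assms(2) by blast
  then have a: "(fst a, h (snd a)) \<in> Mset \<times> carpet"
    using assms(1) by (auto simp: mem_Times_iff)
  have "tau (tensor_map carpet carpet_S h A) = tau_tensor id (tensor_elem carpet carpet_S (fst a) (h (snd a)))"
    unfolding tensor_map_def a_def tau_eq_tau_tensor_id by (simp add: Let_def)
  also have "\<dots> = tau_pair id (fst a, h (snd a))"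
    by (rule tau_tensor_eq[OF _ tensor_elem_in_carrier[OF a] mem_tensor_elem[OF a]])
      (simp add: carpet_S_def)
  also have "\<dots> = tau_tensor h A"
    unfolding tau_tensor_def tau_pair_def a_def by simp
  finally show ?thesis .
qed

lemma taxicab_tau_pair_le_step_cost:
  assumes h: "squams_morphism X d S unit_square taxicab carpet_S h"
    and a: "a \<in> Mset \<times> X" and b: "b \<in> Mset \<times> X"
  shows "taxicab (tau_pair h a) (tau_pair h b) \<le> step_cost X d S a b"
proof (cases "(a, b) \<in> tensor_rel X S")
  case True
  have "\<forall>p\<in>M0. h (S p) = p"
    using squams_morphismD(3)[OF h] by (simp add: carpet_S_def)
  then have "tau_pair h a = tau_pair h b"
    using True by (rule tau_pair_tensor_rel)
  then show ?thesis
    using True by (simp add: step_cost_def taxicab_def)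
next
  case not_rel: False
  show ?thesis
  proof (cases "fst a = fst b")
    case True
    then have "taxicab (tau_pair h a) (tau_pair h b) = taxicab (h (snd a)) (h (snd b)) / 3"
      by (simp add: tau_pair_def taxicab_carpet_map)
    also have "\<dots> \<le> d (snd a) (snd b) / 3"
      using squams_morphismD(2)[OF h] a b by (simp add: mem_Times_iff)
    finally show ?thesis
      using not_rel True by (simp add: step_cost_def base_dist_def)
  next
    case False
    have "tau_pair h a \<in> unit_square" "tau_pair h b \<in> unit_square"
      using a b squams_morphismD(1)[OF h] carpet_map_unit_square
      unfolding tau_pair_def by (simp_all add: mem_Times_iff)
    then show ?thesis
      using not_rel False taxicab_unit_square_le_2 by (simp add: step_cost_def base_dist_def)
  qed
qed

lemma taxicab_tau_pair_le_chain_cost: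
  assumes h: "squams_morphism X d S unit_square taxicab carpet_S h"
  shows "xs \<noteq> [] \<Longrightarrow> set xs \<subseteq> Mset \<times> X \<Longrightarrow>
    taxicab (tau_pair h (hd xs)) (tau_pair h (last xs)) \<le> chain_cost X d S xs"
proof (induction xs rule: induct_list012)
  case (2 a)
  then show ?case
    by (simp add: chain_cost_def taxicab_def)
next
  case (3 a b zs)
  have "taxicab (tau_pair h a) (tau_pair h (last (b # zs)))
      \<le> taxicab (tau_pair h a) (tau_pair h b) + taxicab (tau_pair h b) (tau_pair h (last (b # zs)))"
    by (rule taxicab_triangle)
  also have "\<dots> \<le> step_cost X d S a b + chain_cost X d S (b # zs)"
    using 3 taxicab_tau_pair_le_step_cost[OF h] by (intro add_mono) auto
  also have "\<dots> = chain_cost X d S (a # b # zs)"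
    by (simp add: chain_cost_def)
  finally show ?case
    by simp
qed simp

lemma tau_tensor_morphism:
  assumes X: "square_ms X d S" and h: "squams_morphism X d S unit_square taxicab carpet_S h"
  shows "squams_morphism (tensor_carrier X S) (tensor_dist X d S) (tensor_S X S)
    unit_square taxicab carpet_S (tau_tensor h)"
proof -
  have fixes_M0: "\<forall>p\<in>M0. h (S p) = p"
    using squams_morphismD(3)[OF h] by (simp add: carpet_S_def)
  have some_mem: "(SOME a. a \<in> A) \<in> A \<inter> Mset \<times> X" if "A \<in> tensor_carrier X S" for A
    using some_in_tensor_carrier tensor_carrier_subset that by blast
  have into: "tau_tensor h A \<in> unit_square" if "A \<in> tensor_carrier X S" for A
    using some_mem[OF that] squams_morphismD(1)[OF h] carpet_map_unit_square
    unfolding tau_tensor_def tau_pair_def by (auto simp: mem_Times_iff)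
  have short: "taxicab (tau_tensor h A) (tau_tensor h A') \<le> tensor_dist X d S A A'"
    if A: "A \<in> tensor_carrier X S" and A': "A' \<in> tensor_carrier X S" for A A'
  proof -
    let ?C = "{chain_cost X d S xs | xs. xs \<noteq> [] \<and> set xs \<subseteq> Mset \<times> X \<and> hd xs \<in> A \<and> last xs \<in> A'}"
    have "chain_cost X d S [SOME a. a \<in> A, SOME a. a \<in> A'] \<in> ?C"
      using some_mem[OF A] some_mem[OF A'] by auto
    moreover have "taxicab (tau_tensor h A) (tau_tensor h A') \<le> c" if c: "c \<in> ?C" for c
    proof -
      obtain xs where xs: "c = chain_cost X d S xs" "xs \<noteq> []" "set xs \<subseteq> Mset \<times> X"
        "hd xs \<in> A" "last xs \<in> A'"
        using c by blast
      then show ?thesis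
        using tau_tensor_eq[OF fixes_M0 A xs(4)] tau_tensor_eq[OF fixes_M0 A' xs(5)]
          taxicab_tau_pair_le_chain_cost[OF h xs(2,3)] by simp
    qed
    ultimately show ?thesis
      unfolding tensor_dist_def by (intro cInf_greatest) auto
  qed
  have "tau_tensor h (tensor_S X S p) = p" if p: "p \<in> M0" for p
  proof -
    obtain m q where mq: "m \<in> Mset" "q \<in> M0" "carpet_map m q = p"
      and S_p: "tensor_S X S p = tensor_elem X S m (S q)"
      using tensor_S_eq[OF p] by metis
    have mSq: "(m, S q) \<in> Mset \<times> X"
      using mq square_msD(2)[OF X] by simp
    have "tau_tensor h (tensor_S X S p) = tau_pair h (m, S q)"
      unfolding S_p by (rule tau_tensor_eq[OF fixes_M0 tensor_elem_in_carrier[OF mSq] mem_tensor_elem[OF mSq]])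
    also have "\<dots> = p"
      using fixes_M0 mq unfolding tau_pair_def by simp
    finally show ?thesis .
  qed
  then show ?thesis
    unfolding squams_morphism_def carpet_S_def using into short by auto
qed

section \<open>A morphism into the unit square\<close>

definition mcshane :: "('a \<Rightarrow> 'a \<Rightarrow> real) \<Rightarrow> ('i \<Rightarrow> 'a) \<Rightarrow> 'i set \<Rightarrow> ('i \<Rightarrow> real) \<Rightarrow> 'a \<Rightarrow> real" where
  "mcshane d S P u x = (INF p\<in>P. u p + d x (S p))"

context Metric_space
begin

lemma mcshane_le:
  assumes "bdd_below (u ` P)" "p \<in> P"
  shows "mcshane d S P u x \<le> u p + d x (S p)"
proof -
  obtain c where "\<forall>p\<in>P. c \<le> u p"
    using assms(1) by (auto simp: bdd_below_def)
  then have "bdd_below ((\<lambda>p. u p + d x (S p)) ` P)"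
    by (intro bdd_belowI2[where m = c]) (simp add: add_increasing2)
  then show ?thesis
    unfolding mcshane_def using assms(2) by (rule cINF_lower)
qed

lemma mcshane_lipschitz:
  assumes "S ` P \<subseteq> M" "P \<noteq> {}" "bdd_below (u ` P)" "x \<in> M" "y \<in> M"
  shows "\<bar>mcshane d S P u x - mcshane d S P u y\<bar> \<le> d x y"
proof -
  have one_sided: "mcshane d S P u x - d x y \<le> mcshane d S P u y"
    if "x \<in> M" "y \<in> M" for x y
    unfolding mcshane_def[of _ _ _ _ y]
  proof (rule cINF_greatest[OF assms(2)])
    fix p
    assume "p \<in> P"
    then have "mcshane d S P u x \<le> u p + d x (S p)" "d x (S p) \<le> d x y + d y (S p)"
      using mcshane_le[OF assms(3)] triangle that assms(1) by auto
    then show "mcshane d S P u x - d x y \<le> u p + d y (S p)"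
      by linarith
  qed
  show ?thesis
    using one_sided[OF assms(4,5)] one_sided[OF assms(5,4)] commute[of x y] by linarith
qed

lemma mcshane_extends:
  assumes "S ` P \<subseteq> M" "bdd_below (u ` P)" "\<forall>p\<in>P. \<forall>q\<in>P. u q - u p \<le> d (S q) (S p)" "q \<in> P"
  shows "mcshane d S P u (S q) = u q"
proof (rule antisym)
  show "mcshane d S P u (S q) \<le> u q"
    using mcshane_le[OF assms(2,4), of S "S q"] assms(1,4) by auto
  show "u q \<le> mcshane d S P u (S q)"
    unfolding mcshane_def using assms(3,4) by (intro cINF_greatest) (auto simp: algebra_simps)
qed

end

lemma clip_lipschitz: "\<bar>max 0 (min 1 s) - max 0 (min 1 t)\<bar> \<le> \<bar>s - t :: real\<bar>"
  by (auto simp: max_def min_def abs_if)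

lemma half_sum_diff_abs_le:
  fixes a b r :: real
  assumes "\<bar>a\<bar> \<le> r" "\<bar>b\<bar> \<le> r"
  shows "\<bar>(a + b) / 2\<bar> + \<bar>(a - b) / 2\<bar> \<le> r"
proof -
  have "\<bar>a + b\<bar> + \<bar>a - b\<bar> \<le> 2 * r"
    using assms by arith
  then show ?thesis
    by simp
qed

lemma square_ms_mcshane:
  assumes X: "square_ms X d S" and w: "\<And>p q. w q - w p \<le> taxicab q p"
  shows "p \<in> M0 \<Longrightarrow> mcshane d S M0 w (S p) = w p"
    and "x \<in> X \<Longrightarrow> y \<in> X \<Longrightarrow> \<bar>mcshane d S M0 w x - mcshane d S M0 w y\<bar> \<le> d x y"
proof -
  interpret Metric_space X d
    by (rule square_msD(1)[OF X])
  have S: "S ` M0 \<subseteq> X"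
    using square_msD(2)[OF X] by blast
  have origin: "(0, 0) \<in> M0"
    unfolding M0_def by simp
  have "bdd_below (w ` M0)"
  proof (rule bdd_belowI2)
    fix p
    assume "p \<in> M0"
    then have "taxicab (0, 0) p \<le> 2"
      using origin M0_subset_unit_square by (intro taxicab_unit_square_le_2) auto
    then show "w (0, 0) - 2 \<le> w p"
      using w[of "(0, 0)" p] by linarith
  qed
  moreover have "\<forall>p\<in>M0. \<forall>q\<in>M0. w q - w p \<le> d (S q) (S p)"
    using w square_msD(3)[OF X] by (meson order_trans)
  ultimately show "p \<in> M0 \<Longrightarrow> mcshane d S M0 w (S p) = w p"
    and "x \<in> X \<Longrightarrow> y \<in> X \<Longrightarrow> \<bar>mcshane d S M0 w x - mcshane d S M0 w y\<bar> \<le> d x y"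
    using mcshane_extends[OF S] mcshane_lipschitz[OF S] origin by blast+
qed

(* In the coordinates x + y and x - y the taxicab metric is the maximum metric, so McShane
   extensions of these two coordinates, rotated back and clipped to [0, 1], give a short map. *)
lemma square_ms_morphism_to_unit_square:
  assumes X: "square_ms X d S"
  shows "\<exists>g. squams_morphism X d S unit_square taxicab carpet_S g"
proof -
  define u where "u = mcshane d S M0 (\<lambda>p. fst p + snd p)"
  define v where "v = mcshane d S M0 (\<lambda>p. fst p - snd p)"
  define clip :: "real \<Rightarrow> real" where "clip t = max 0 (min 1 t)" for t
  define g where "g x = (clip ((u x + v x) / 2), clip ((u x - v x) / 2))" for x
  have "fst q + snd q - (fst p + snd p) \<le> taxicab q p" "fst q - snd q - (fst p - snd p) \<le> taxicab q p"
    for p q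
    unfolding taxicab_def by auto
  note u = square_ms_mcshane[OF X this(1), folded u_def]
    and v = square_ms_mcshane[OF X this(2), folded v_def]
  have "g \<in> X \<rightarrow> unit_square"
    unfolding g_def clip_def by auto
  moreover have "g (S p) = p" if "p \<in> M0" for p
    using u(1)[OF that] v(1)[OF that] that M0_subset_unit_square
    unfolding g_def clip_def by (auto simp: mem_Times_iff)
  moreover have "taxicab (g x) (g y) \<le> d x y" if "x \<in> X" "y \<in> X" for x y
  proof -
    have rotate: "(u x + v x) / 2 - (u y + v y) / 2 = ((u x - u y) + (v x - v y)) / 2"
      "(u x - v x) / 2 - (u y - v y) / 2 = ((u x - u y) - (v x - v y)) / 2"
      by (simp_all add: field_simps)
    have "taxicab (g x) (g y)
        \<le> \<bar>(u x + v x) / 2 - (u y + v y) / 2\<bar> + \<bar>(u x - v x) / 2 - (u y - v y) / 2\<bar>"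
      unfolding taxicab_def g_def clip_def fst_conv snd_conv by (intro add_mono clip_lipschitz)
    also have "\<dots> \<le> d x y"
      unfolding rotate by (intro half_sum_diff_abs_le u(2) v(2) that)
    finally show ?thesis .
  qed
  ultimately show ?thesis
    unfolding squams_morphism_def carpet_S_def by blast
qed

section \<open>The contraction\<close>

locale squams_coalgebra =
  fixes B :: "'b set" and dB :: "'b \<Rightarrow> 'b \<Rightarrow> real" and SB :: "real \<times> real \<Rightarrow> 'b"
    and \<beta> :: "'b \<Rightarrow> ((nat \<times> nat) \<times> 'b) set"
  assumes square: "square_ms B dB SB"
    and coalgebra: "squams_morphism B dB SB (tensor_carrier B SB) (tensor_dist B dB SB) (tensor_S B SB) \<beta>"
begin

definition Phi :: "('b \<Rightarrow> real \<times> real) \<Rightarrow> 'b \<Rightarrow> real \<times> real" where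
  "Phi h = tau_tensor h \<circ> \<beta>"

lemma Phi_representative:
  assumes "x \<in> B"
  obtains m y where "m \<in> Mset" "y \<in> B" "\<And>h. Phi h x = carpet_map m (h y)"
proof -
  define a where "a = (SOME a. a \<in> \<beta> x)"
  have "\<beta> x \<in> tensor_carrier B SB"
    using squams_morphismD(1)[OF coalgebra assms] .
  then have "a \<in> Mset \<times> B"
    unfolding a_def using some_in_tensor_carrier tensor_carrier_subset by blast
  show ?thesis
  proof (rule that)
    show "fst a \<in> Mset" "snd a \<in> B"
      using \<open>a \<in> Mset \<times> B\<close> by auto
    show "Phi h x = carpet_map (fst a) (h (snd a))" for h
      unfolding Phi_def tau_tensor_def tau_pair_def a_def by simp
  qed
qed

lemma tau_tensor_map_eq_Phi:
  assumes "h \<in> B \<rightarrow> carpet" "x \<in> B"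
  shows "tau (tensor_map carpet carpet_S h (\<beta> x)) = Phi h x"
  using tau_tensor_map[OF assms(1) squams_morphismD(1)[OF coalgebra assms(2)]]
  unfolding Phi_def by simp

lemma carpet_morphism_fixpoint_iff:
  assumes "squams_morphism B dB SB carpet taxicab carpet_S h"
  shows "(\<forall>x\<in>B. h x = tau (tensor_map carpet carpet_S h (\<beta> x))) \<longleftrightarrow> (\<forall>x\<in>B. Phi h x = h x)"
  using tau_tensor_map_eq_Phi[OF squams_morphism_funcset[OF assms]] by auto

lemma Phi_morphism:
  "squams_morphism B dB SB unit_square taxicab carpet_S h \<Longrightarrow>
    squams_morphism B dB SB unit_square taxicab carpet_S (Phi h)"
  unfolding Phi_def by (rule squams_morphism_comp[OF coalgebra tau_tensor_morphism[OF square]])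

lemma funpow_Phi_morphism:
  "squams_morphism B dB SB unit_square taxicab carpet_S h \<Longrightarrow>
    squams_morphism B dB SB unit_square taxicab carpet_S ((Phi ^^ n) h)"
  by (induction n) (simp_all add: Phi_morphism)

lemma funpow_Phi_funcset:
  assumes K: "\<And>m z. m \<in> Mset \<Longrightarrow> z \<in> K \<Longrightarrow> carpet_map m z \<in> K" and h: "h \<in> B \<rightarrow> K"
  shows "(Phi ^^ n) h \<in> B \<rightarrow> K"
proof (induction n)
  case (Suc n)
  show ?case
  proof
    fix x
    assume "x \<in> B"
    then obtain m y where "m \<in> Mset" "y \<in> B" "\<And>h. Phi h x = carpet_map m (h y)"
      using Phi_representative by blast
    then show "(Phi ^^ Suc n) h x \<in> K"
      using K Suc.IH by (simp add: Pi_iff)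
  qed
qed (simp add: h)

lemma taxicab_Phi_le:
  assumes "\<And>y. y \<in> B \<Longrightarrow> taxicab (a y) (b y) \<le> c" "x \<in> B"
  shows "taxicab (Phi a x) (Phi b x) \<le> c / 3"
proof -
  obtain m y where "m \<in> Mset" "y \<in> B" "\<And>h. Phi h x = carpet_map m (h y)"
    using Phi_representative[OF assms(2)] by blast
  then show ?thesis
    using assms(1) by (simp add: taxicab_carpet_map divide_right_mono)
qed

lemma taxicab_funpow_Phi_le:
  assumes "\<And>y. y \<in> B \<Longrightarrow> taxicab (a y) (b y) \<le> c"
  shows "x \<in> B \<Longrightarrow> taxicab ((Phi ^^ n) a x) ((Phi ^^ n) b x) \<le> c / 3 ^ n"
proof (induction n arbitrary: x)
  case (Suc n)
  then have "taxicab (Phi ((Phi ^^ n) a) x) (Phi ((Phi ^^ n) b) x) \<le> c / 3 ^ n / 3"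
    by (intro taxicab_Phi_le)
  then show ?case
    by (simp add: mult.commute)
qed (simp add: assms)

lemma taxicab_funpow_Phi_unit_square:
  assumes "a \<in> B \<rightarrow> unit_square" "b \<in> B \<rightarrow> unit_square" "x \<in> B"
  shows "taxicab ((Phi ^^ n) a x) ((Phi ^^ n) b x) \<le> 2 / 3 ^ n"
  using assms by (intro taxicab_funpow_Phi_le taxicab_unit_square_le_2) auto

lemma convergent_funpow_Phi:
  assumes a: "a \<in> B \<rightarrow> unit_square" and x: "x \<in> B"
  shows "convergent (\<lambda>n. (Phi ^^ n) a x)"
proof -
  have "Cauchy (\<lambda>n. (Phi ^^ n) a x)"
    unfolding Cauchy_altdef2
  proof (intro allI impI)
    fix e :: real
    assume "e > 0"
    then obtain N where N: "2 / 3 ^ N < e"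
      using ex_div_pow3_less by blast
    have "dist ((Phi ^^ n) a x) ((Phi ^^ N) a x) < e" if "n \<ge> N" for n
    proof -
      obtain k where "n = N + k"
        using \<open>n \<ge> N\<close> le_Suc_ex by blast
      then have "(Phi ^^ n) a x = (Phi ^^ N) ((Phi ^^ k) a) x"
        by (simp add: funpow_add)
      moreover have "(Phi ^^ k) a \<in> B \<rightarrow> unit_square"
        using funpow_Phi_funcset[OF carpet_map_unit_square a] .
      ultimately have "taxicab ((Phi ^^ n) a x) ((Phi ^^ N) a x) \<le> 2 / 3 ^ N"
        using taxicab_funpow_Phi_unit_square a x by simp
      then show ?thesis
        using N dist_le_taxicab[of "(Phi ^^ n) a x" "(Phi ^^ N) a x"] by linarith
    qed
    then show "\<exists>N. \<forall>n\<ge>N. dist ((Phi ^^ n) a x) ((Phi ^^ N) a x) < e"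
      by blast
  qed
  then show ?thesis
    by (simp add: Cauchy_convergent_iff)
qed

lemma funpow_Phi_same_limit:
  assumes "a \<in> B \<rightarrow> unit_square" "b \<in> B \<rightarrow> unit_square" "x \<in> B"
    and "(\<lambda>n. (Phi ^^ n) a x) \<longlonglongrightarrow> l"
  shows "(\<lambda>n. (Phi ^^ n) b x) \<longlonglongrightarrow> l"
proof (rule Lim_transform[OF assms(4)])
  show "(\<lambda>n. (Phi ^^ n) b x - (Phi ^^ n) a x) \<longlonglongrightarrow> 0"
  proof (rule Lim_null_comparison)
    have "norm ((Phi ^^ n) b x - (Phi ^^ n) a x) \<le> 2 / 3 ^ n" for n
      using taxicab_funpow_Phi_unit_square[OF assms(2,1,3), of n]
        dist_le_taxicab[of "(Phi ^^ n) b x" "(Phi ^^ n) a x"]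
      by (simp add: dist_norm)
    then show "\<forall>\<^sub>F n in sequentially. norm ((Phi ^^ n) b x - (Phi ^^ n) a x) \<le> 2 / 3 ^ n"
      by simp
    show "(\<lambda>n. 2 / 3 ^ n :: real) \<longlonglongrightarrow> 0"
      by (rule LIMSEQ_divide_realpow_zero) simp
  qed
qed

lemma Phi_limit_fixpoint:
  assumes lim: "\<forall>x\<in>B. (\<lambda>n. (Phi ^^ n) a x) \<longlonglongrightarrow> g x" and x: "x \<in> B"
  shows "Phi g x = g x"
proof -
  obtain m y where "m \<in> Mset" and y: "y \<in> B" and Phi_x: "\<And>h. Phi h x = carpet_map m (h y)"
    using Phi_representative[OF x] by blast
  have "(\<lambda>n. (Phi ^^ Suc n) a x) \<longlonglongrightarrow> Phi g x"
    unfolding funpow.simps comp_def Phi_x carpet_map_def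
    using lim y by (auto intro!: tendsto_intros)
  moreover have "(\<lambda>n. (Phi ^^ Suc n) a x) \<longlonglongrightarrow> g x"
    using lim x LIMSEQ_Suc by blast
  ultimately show ?thesis
    by (rule LIMSEQ_unique)
qed

lemma limit_funpow_Phi_morphism:
  assumes h: "squams_morphism B dB SB unit_square taxicab carpet_S h"
    and lim: "\<forall>x\<in>B. (\<lambda>n. (Phi ^^ n) h x) \<longlonglongrightarrow> g x"
  shows "squams_morphism B dB SB carpet taxicab carpet_S g"
proof -
  have h_unit: "h \<in> B \<rightarrow> unit_square"
    using squams_morphism_funcset[OF h] .
  obtain c where c: "c \<in> carpet"
    using carpet_nonempty by blast
  have "g x \<in> carpet" if x: "x \<in> B" for x
  proof (rule closed_sequentially[OF closed_carpet])
    have c_carpet: "(\<lambda>_. c) \<in> B \<rightarrow> carpet" and c_unit: "(\<lambda>_. c) \<in> B \<rightarrow> unit_square"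
      using c carpet_subset_unit_square by auto
    show "(Phi ^^ n) (\<lambda>_. c) x \<in> carpet" for n
      using funpow_Phi_funcset[OF carpet_map_carpet c_carpet] x by blast
    show "(\<lambda>n. (Phi ^^ n) (\<lambda>_. c) x) \<longlonglongrightarrow> g x"
      using funpow_Phi_same_limit[OF h_unit c_unit x] lim x by blast
  qed
  moreover have "g (SB p) = p" if p: "p \<in> M0" for p
  proof -
    have "(\<lambda>n. (Phi ^^ n) h (SB p)) = (\<lambda>n. p)"
      using squams_morphismD(3)[OF funpow_Phi_morphism[OF h] p] by (simp add: carpet_S_def)
    moreover have "(\<lambda>n. (Phi ^^ n) h (SB p)) \<longlonglongrightarrow> g (SB p)"
      using lim square_msD(2)[OF square p] by blast
    ultimately show ?thesis
      using LIMSEQ_unique tendsto_const by metis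
  qed
  moreover have "taxicab (g x) (g y) \<le> dB x y" if "x \<in> B" "y \<in> B" for x y
  proof (rule LIMSEQ_le_const2)
    show "(\<lambda>n. taxicab ((Phi ^^ n) h x) ((Phi ^^ n) h y)) \<longlonglongrightarrow> taxicab (g x) (g y)"
      unfolding taxicab_def using lim that by (auto intro!: tendsto_intros)
    show "\<exists>N. \<forall>n\<ge>N. taxicab ((Phi ^^ n) h x) ((Phi ^^ n) h y) \<le> dB x y"
      using squams_morphismD(2)[OF funpow_Phi_morphism[OF h] that] by blast
  qed
  ultimately show ?thesis
    unfolding squams_morphism_def carpet_S_def by blast
qed

lemma Phi_fixpoint_unique:
  assumes a: "a \<in> B \<rightarrow> unit_square" "\<forall>x\<in>B. Phi a x = a x"
    and b: "b \<in> B \<rightarrow> unit_square" "\<forall>x\<in>B. Phi b x = b x"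
    and x: "x \<in> B"
  shows "a x = b x"
proof (rule taxicab_le_div_pow3_imp_eq)
  have "\<forall>x\<in>B. taxicab (a x) (b x) \<le> 2 / 3 ^ n" for n
  proof (induction n)
    case 0
    have "taxicab (a x) (b x) \<le> 2" if "x \<in> B" for x
      using a(1) b(1) that by (intro taxicab_unit_square_le_2) auto
    then show ?case
      by simp
  next
    case (Suc n)
    then have "taxicab (Phi a x) (Phi b x) \<le> 2 / 3 ^ n / 3" if "x \<in> B" for x
      using that by (intro taxicab_Phi_le) auto
    then show ?case
      using a(2) b(2) by (simp add: mult.commute)
  qed
  then show "taxicab (a x) (b x) \<le> 2 / 3 ^ n" for n
    using x by blast
qed

end

theorem mainTheorem4:
  fixes B :: "'b set" and dB :: "'b \<Rightarrow> 'b \<Rightarrow> real" and SB :: "real \<times> real \<Rightarrow> 'b"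
    and \<beta> :: "'b \<Rightarrow> ((nat \<times> nat) \<times> 'b) set"
  assumes "square_ms B dB SB"
    and "squams_morphism B dB SB (tensor_carrier B SB) (tensor_dist B dB SB) (tensor_S B SB) \<beta>"
  shows "\<exists>g. squams_morphism B dB SB carpet taxicab carpet_S g \<and>
             (\<forall>x\<in>B. g x = tau (tensor_map carpet carpet_S g (\<beta> x))) \<and>
             (\<forall>h. squams_morphism B dB SB carpet taxicab carpet_S h \<and>
                  (\<forall>x\<in>B. h x = tau (tensor_map carpet carpet_S h (\<beta> x)))
                  \<longrightarrow> (\<forall>x\<in>B. h x = g x))"
proof -
  interpret squams_coalgebra B dB SB \<beta>
    using assms by (rule squams_coalgebra.intro)
  obtain h0 where h0: "squams_morphism B dB SB unit_square taxicab carpet_S h0"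
    using square_ms_morphism_to_unit_square[OF assms(1)] by blast
  define g where "g x = lim (\<lambda>n. (Phi ^^ n) h0 x)" for x
  have "\<forall>x\<in>B. (\<lambda>n. (Phi ^^ n) h0 x) \<longlonglongrightarrow> g x"
    using convergent_funpow_Phi[OF squams_morphism_funcset[OF h0]]
    unfolding g_def by (simp add: convergent_LIMSEQ_iff)
  then have g: "squams_morphism B dB SB carpet taxicab carpet_S g" "\<forall>x\<in>B. Phi g x = g x"
    using limit_funpow_Phi_morphism[OF h0] Phi_limit_fixpoint by blast+
  have unit: "h \<in> B \<rightarrow> unit_square"
    if "squams_morphism B dB SB carpet taxicab carpet_S h" for h
    using squams_morphism_funcset[OF that] carpet_subset_unit_square by auto
  show ?thesis
  proof (intro exI[of _ g] conjI allI impI ballI)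
    show "squams_morphism B dB SB carpet taxicab carpet_S g"
      by (rule g(1))
    show "g x = tau (tensor_map carpet carpet_S g (\<beta> x))" if "x \<in> B" for x
      using g(2) carpet_morphism_fixpoint_iff[OF g(1)] that by simp
    show "h x = g x"
      if "squams_morphism B dB SB carpet taxicab carpet_S h \<and>
        (\<forall>x\<in>B. h x = tau (tensor_map carpet carpet_S h (\<beta> x)))" and "x \<in> B" for h x
      using that carpet_morphism_fixpoint_iff Phi_fixpoint_unique[OF unit _ unit[OF g(1)] g(2)]
      by blast
  qed
qed

end
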